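(* If $U$ is an atemporal action model over $L_{\mathsf{YDEL}}$, then $U^\sharp$ is an action model over $L_{\mathsf{RDETL}}$ of the kind allowed in $L_{\mathsf{RDETL}}$, i.e. $U^\sharp\in\mathsf{Act}(L_{\mathsf{RDETL}})$.
   Context: Fix a nonempty finite set $\mathsf{Agt}$ of agents and a nonempty set $\mathsf{Prop}$ of letters. Kripke models $M=(W^M,(\to^M_a)_a,\leadsto^M,V^M)$: nonempty $W^M$, binary relations $\to^M_a,\leadsto^M$, valuation $V^M:\mathsf{Prop}\to\mathcal P(W^M)$. Action models over a set of formulas $F$: $U=(W^U,(\to^U_a)_a,\leadsto^U,\mathrm{pre}^U)$ with $W^U$ nonempty finite, binary relations, $\mathrm{pre}^U:W^U\to F$; atemporal means $\leadsto^U=\emptyset$; $s$ is a past state if no $s'\leadsto^Us$. $L_{\mathsf{DETL}}$: $\varphi::=p\mid\neg\varphi\mid\varphi\wedge\varphi\mid\Box_a\varphi\mid[Y]\varphi\mid[U,s]\varphi$ with $(U,s)$ any pointed action model over $L_{\mathsf{DETL}}$; semantics: Boolean standard, $\Box_a$ over $\to^M_a$-successors, $[Y]$ over $\leadsto^M$-predecessors, and $M,w\models[U,s]\varphi$ iff $M,w\models\mathrm{pre}^U(s)$ implies $M[U],(w,s)\models\varphi$, where $M[U]$ has worlds $\{(v,t):M,v\models\mathrm{pre}^U(t)\}$, $(v,t)\to_a(v',t')$ iff $v\to^M_av'$ and $t\to^U_at'$, $(v',t')\leadsto(v,t)$ iff ($v'\leadsto^Mv$, $t'=t$, $t$ past state)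 or ($v'=v$, $t'\leadsto^Ut$), valuation inherited from $M$; $\models\varphi$ means truth at all pointed Kripke models. $L_{\mathsf{YDEL}}$ is the fragment of $L_{\mathsf{DETL}}$ in which all action models used (recursively) are atemporal; the symbol $\flat$ is never a world or event of it. Progressions, histories, depth: a progression is a finite nonempty $x_0,\dots,x_n$ with $x_i\leadsto x_{i+1}$; a history cannot be extended at its beginning; $\mathrm{depth}(x)$ is the maximal length of a history ending at $x$ ($\infty$ if none). Action model properties: depth-definedness (all depths finite); knowledge of the past ($w'\leadsto w\to_av$ implies $\exists v'\leadsto v$); knowledge of the initial time ($w\to_av$ and no $w'\leadsto w$ imply no $v'\leadsto v$); uniqueness of the past; perfect recall ($w\leadsto v\to_av'$ implies $\exists w'$, $w\to_aw'\leadsto v'$); history preservation ($s'\leadsto^Us$ implies $\models\mathrm{pre}^U(s)\to\mathrm{pre}^U(s')$, and every past state is an epistemic past state, i.e. a past state with valid precondition whose only outgoing epistemic arrows are the loops $s\to_as$ for each $a$). $L_{\mathsf{RDETL}}$ is the sublanguage of $L_{\mathsf{DETL}}$ allowing only $[U,s]$ with $U$ having preconditions (recursively) in $L_{\mathsf{RDETL}}$ and satisfying depth-definedness, knowledge of the past, history preservation, knowledge of the initial time, uniqueness of the past and perfect recall; $\mathsf{Act}(L_{\mathsf{RDETL}})$ denotes the set of such action models. Translation $\sharp$: $\bot^\sharp=\bot$, $p^\sharp=p$, $\sharp$ commutes with $\neg$, $\wedge$, $\Box_a$, $[Y]$, and $([U,s]\varphi)^\sharp=[U^\sharp,s]\varphi^\sharp$,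 where $W^{U^\sharp}=W^U\cup\{\flat\}$; $s\to^{U^\sharp}_as'$ iff $s\to^U_as'$ or $s=s'=\flat$; $s\leadsto^{U^\sharp}s'$ iff $s=\flat$ and $s'\in W^U$; $\mathrm{pre}^{U^\sharp}(s)=\mathrm{pre}^U(s)^\sharp$ for $s\in W^U$ and $\mathrm{pre}^{U^\sharp}(\flat)=\top$. *)

theory Defs
  imports Main "HOL-Library.Extended_Nat"
begin

text \<open>Events of action models. The distinguished event Flat plays the role of the
  fresh symbol (flat) used by the translation; all other events are Ev n.\<close>
datatype ev = Flat | Ev nat

text \<open>The constructor Act carries a
  pointed action model (events, epistemic relations, temporal relation, preconditions,
  point) and the formula in its scope: Act E R T P s f stands for [U,s]f.\<close>
datatype ('p,'a) fm =
    Atom 'p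
  | Neg "('p,'a) fm"
  | Conj "('p,'a) fm" "('p,'a) fm"
  | Box 'a "('p,'a) fm"
  | Yest "('p,'a) fm"
  | Act "ev set" "'a \<Rightarrow> (ev \<times> ev) set" "(ev \<times> ev) set" "ev \<Rightarrow> ('p,'a) fm" ev "('p,'a) fm"

definition fbot :: "('p,'a) fm" where
  "fbot = Conj (Atom undefined) (Neg (Atom undefined))"

definition ftop :: "('p,'a) fm" where
  "ftop = Neg fbot"

definition fimp :: "('p,'a) fm \<Rightarrow> ('p,'a) fm \<Rightarrow> ('p,'a) fm" where
  "fimp f g = Neg (Conj f (Neg g))"

record ('p,'a) amodel =
  evs  :: "ev set"
  erel :: "'a \<Rightarrow> (ev \<times> ev) set"
  etmp :: "(ev \<times> ev) set"
  pre  :: "ev \<Rightarrow> ('p,'a) fm"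

definition act :: "('p,'a) amodel \<Rightarrow> ev \<Rightarrow> ('p,'a) fm \<Rightarrow> ('p,'a) fm" where
  "act U s f = Act (evs U) (erel U) (etmp U) (pre U) s f"

definition mk_am :: "ev set \<Rightarrow> ('a \<Rightarrow> (ev \<times> ev) set) \<Rightarrow> (ev \<times> ev) set \<Rightarrow> (ev \<Rightarrow> ('p,'a) fm)
    \<Rightarrow> ('p,'a) amodel" where
  "mk_am E R T P = \<lparr> evs = E, erel = R, etmp = T, pre = P \<rparr>"

definition wf_am :: "('p,'a) amodel \<Rightarrow> bool" where
  "wf_am U \<longleftrightarrow> evs U \<noteq> {} \<and> finite (evs U) \<and> (\<forall>a. erel U a \<subseteq> evs U \<times> evs U)
     \<and> etmp U \<subseteq> evs U \<times> evs U"

definition atemporal :: "('p,'a) amodel \<Rightarrow> bool" where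
  "atemporal U \<longleftrightarrow> etmp U = {}"

definition past_state :: "('p,'a) amodel \<Rightarrow> ev \<Rightarrow> bool" where
  "past_state U s \<longleftrightarrow> s \<in> evs U \<and> (\<nexists>s'. (s', s) \<in> etmp U)"

text \<open>Worlds are pairs of a base world of type 'u and a list of events; the product
  update sends the world (v,t) of M[U] to ext v t. This is isomorphic to the pair
  construction of the paper, and every Kripke model (with worlds of type 'u) is
  isomorphic to one whose worlds are of the form (u, []).\<close>
type_synonym 'u world = "'u \<times> ev list"

record ('u,'p,'a) kmodel =
  Wd  :: "'u world set"
  Rel :: "'a \<Rightarrow> ('u world \<times> 'u world) set"
  Tmp :: "('u world \<times> 'u world) set"
  Val :: "'p \<Rightarrow> 'u world set"

definition kwf :: "('u,'p,'a) kmodel \<Rightarrow> bool" where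
  "kwf M \<longleftrightarrow> Wd M \<noteq> {} \<and> (\<forall>a. Rel M a \<subseteq> Wd M \<times> Wd M) \<and> Tmp M \<subseteq> Wd M \<times> Wd M
     \<and> (\<forall>p. Val M p \<subseteq> Wd M)"

definition ext :: "'u world \<Rightarrow> ev \<Rightarrow> 'u world" where
  "ext w t = (fst w, snd w @ [t])"

text \<open>Product update M[U]; P v t stands for "M, v satisfies pre(t)".\<close>
definition upd :: "('u,'p,'a) kmodel \<Rightarrow> ev set \<Rightarrow> ('a \<Rightarrow> (ev \<times> ev) set) \<Rightarrow> (ev \<times> ev) set
   \<Rightarrow> ('u world \<Rightarrow> ev \<Rightarrow> bool) \<Rightarrow> ('u,'p,'a) kmodel" where
 "upd M E R T P = (let W' = {ext v t | v t. v \<in> Wd M \<and> t \<in> E \<and> P v t} in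
   \<lparr> Wd = W',
     Rel = (\<lambda>a. {(ext v t, ext v' t') | v t v' t'. ext v t \<in> W' \<and> ext v' t' \<in> W'
                 \<and> (v,v') \<in> Rel M a \<and> (t,t') \<in> R a}),
     Tmp = {(ext v' t', ext v t) | v t v' t'. ext v t \<in> W' \<and> ext v' t' \<in> W' \<and>
              (((v',v) \<in> Tmp M \<and> t' = t \<and> (\<nexists>t0. (t0,t) \<in> T)) \<or> (v' = v \<and> (t',t) \<in> T))},
     Val = (\<lambda>p. {ext v t | v t. ext v t \<in> W' \<and> v \<in> Val M p}) \<rparr>)"

primrec sat :: "('u,'p,'a) kmodel \<Rightarrow> 'u world \<Rightarrow> ('p,'a) fm \<Rightarrow> bool" where
  "sat M w (Atom p) = (w \<in> Val M p)"
| "sat M w (Neg f) = (\<not> sat M w f)"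
| "sat M w (Conj f g) = (sat M w f \<and> sat M w g)"
| "sat M w (Box a f) = (\<forall>v \<in> Wd M. (w,v) \<in> Rel M a \<longrightarrow> sat M v f)"
| "sat M w (Yest f) = (\<forall>v \<in> Wd M. (v,w) \<in> Tmp M \<longrightarrow> sat M v f)"
| "sat M w (Act E R T P s f) =
     (sat M w (P s) \<longrightarrow> sat (upd M E R T (\<lambda>v t. sat M v (P t))) (ext w s) f)"

definition valid :: "'u itself \<Rightarrow> ('p,'a) fm \<Rightarrow> bool" where
  "valid (_ :: 'u itself) f \<longleftrightarrow>
     (\<forall>(M :: ('u,'p,'a) kmodel) w. kwf M \<and> w \<in> Wd M \<longrightarrow> sat M w f)"

definition progression :: "('p,'a) amodel \<Rightarrow> ev list \<Rightarrow> bool" where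
  "progression U xs \<longleftrightarrow> xs \<noteq> [] \<and> set xs \<subseteq> evs U
     \<and> (\<forall>i. Suc i < length xs \<longrightarrow> (xs ! i, xs ! Suc i) \<in> etmp U)"

definition history :: "('p,'a) amodel \<Rightarrow> ev list \<Rightarrow> bool" where
  "history U xs \<longleftrightarrow> progression U xs \<and> (\<nexists>y. (y, hd xs) \<in> etmp U)"

text \<open>Length of the progression x0,...,xn is n.\<close>
definition hist_lengths :: "('p,'a) amodel \<Rightarrow> ev \<Rightarrow> nat set" where
  "hist_lengths U x = {length xs - 1 | xs. history U xs \<and> last xs = x}"

definition depth :: "('p,'a) amodel \<Rightarrow> ev \<Rightarrow> enat" where
  "depth U x = (if hist_lengths U x \<noteq> {} \<and> finite (hist_lengths U x)
                then enat (Max (hist_lengths U x)) else \<infinity>)"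

definition depth_defined :: "('p,'a) amodel \<Rightarrow> bool" where
  "depth_defined U \<longleftrightarrow> (\<forall>x \<in> evs U. depth U x \<noteq> \<infinity>)"

definition knowledge_of_past :: "('p,'a) amodel \<Rightarrow> bool" where
  "knowledge_of_past U \<longleftrightarrow> (\<forall>a w' w v. (w', w) \<in> etmp U \<and> (w, v) \<in> erel U a
      \<longrightarrow> (\<exists>v'. (v', v) \<in> etmp U))"

definition knowledge_of_initial_time :: "('p,'a) amodel \<Rightarrow> bool" where
  "knowledge_of_initial_time U \<longleftrightarrow> (\<forall>a w v. (w, v) \<in> erel U a \<and> (\<nexists>w'. (w', w) \<in> etmp U)
      \<longrightarrow> (\<nexists>v'. (v', v) \<in> etmp U))"

definition uniqueness_of_past :: "('p,'a) amodel \<Rightarrow> bool" where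
  "uniqueness_of_past U \<longleftrightarrow> (\<forall>w w1 w2. (w1, w) \<in> etmp U \<and> (w2, w) \<in> etmp U \<longrightarrow> w1 = w2)"

definition perfect_recall :: "('p,'a) amodel \<Rightarrow> bool" where
  "perfect_recall U \<longleftrightarrow> (\<forall>a w v v'. (w, v) \<in> etmp U \<and> (v, v') \<in> erel U a
      \<longrightarrow> (\<exists>w'. (w, w') \<in> erel U a \<and> (w', v') \<in> etmp U))"

definition epistemic_past_state :: "'u itself \<Rightarrow> ('p,'a) amodel \<Rightarrow> ev \<Rightarrow> bool" where
  "epistemic_past_state TY U s \<longleftrightarrow> past_state U s \<and> valid TY (pre U s)
     \<and> (\<forall>a t. (s, t) \<in> erel U a \<longleftrightarrow> t = s)"

definition history_preservation :: "'u itself \<Rightarrow> ('p,'a) amodel \<Rightarrow> bool" where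
  "history_preservation TY U \<longleftrightarrow>
     (\<forall>s' s. (s', s) \<in> etmp U \<longrightarrow> valid TY (fimp (pre U s) (pre U s')))
     \<and> (\<forall>s. past_state U s \<longrightarrow> epistemic_past_state TY U s)"

definition rdetl_props :: "'u itself \<Rightarrow> ('p,'a) amodel \<Rightarrow> bool" where
  "rdetl_props TY U \<longleftrightarrow> wf_am U \<and> depth_defined U \<and> knowledge_of_past U
     \<and> history_preservation TY U \<and> knowledge_of_initial_time U \<and> uniqueness_of_past U
     \<and> perfect_recall U"

primrec in_ydel :: "('p,'a) fm \<Rightarrow> bool" where
  "in_ydel (Atom p) = True"
| "in_ydel (Neg f) = in_ydel f"
| "in_ydel (Conj f g) = (in_ydel f \<and> in_ydel g)"
| "in_ydel (Box a f) = in_ydel f"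
| "in_ydel (Yest f) = in_ydel f"
| "in_ydel (Act E R T P s f) =
     (wf_am (mk_am E R T P) \<and> atemporal (mk_am E R T P) \<and> Flat \<notin> E
      \<and> (\<forall>t \<in> E. in_ydel (P t)) \<and> s \<in> E \<and> in_ydel f)"

definition ydel_am :: "('p,'a) amodel \<Rightarrow> bool" where
  "ydel_am U \<longleftrightarrow> wf_am U \<and> Flat \<notin> evs U \<and> (\<forall>t \<in> evs U. in_ydel (pre U t))"

primrec in_rdetl :: "'u itself \<Rightarrow> ('p,'a) fm \<Rightarrow> bool" where
  "in_rdetl TY (Atom p) = True"
| "in_rdetl TY (Neg f) = in_rdetl TY f"
| "in_rdetl TY (Conj f g) = (in_rdetl TY f \<and> in_rdetl TY g)"
| "in_rdetl TY (Box a f) = in_rdetl TY f"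
| "in_rdetl TY (Yest f) = in_rdetl TY f"
| "in_rdetl TY (Act E R T P s f) =
     (rdetl_props TY (mk_am E R T P) \<and> (\<forall>t \<in> E. in_rdetl TY (P t)) \<and> s \<in> E \<and> in_rdetl TY f)"

definition in_Act_rdetl :: "'u itself \<Rightarrow> ('p,'a) amodel \<Rightarrow> bool" where
  "in_Act_rdetl TY U \<longleftrightarrow> rdetl_props TY U \<and> (\<forall>t \<in> evs U. in_rdetl TY (pre U t))"

primrec sharp :: "('p,'a) fm \<Rightarrow> ('p,'a) fm" where
  "sharp (Atom p) = Atom p"
| "sharp (Neg f) = Neg (sharp f)"
| "sharp (Conj f g) = Conj (sharp f) (sharp g)"
| "sharp (Box a f) = Box a (sharp f)"
| "sharp (Yest f) = Yest (sharp f)"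
| "sharp (Act E R T P s f) =
     Act (insert Flat E) (\<lambda>a. R a \<union> {(Flat, Flat)}) ({Flat} \<times> E)
         (\<lambda>t. if t = Flat then ftop else sharp (P t)) s (sharp f)"

definition sharp_am :: "('p,'a) amodel \<Rightarrow> ('p,'a) amodel" where
  "sharp_am U = \<lparr> evs = insert Flat (evs U),
                  erel = (\<lambda>a. erel U a \<union> {(Flat, Flat)}),
                  etmp = {Flat} \<times> evs U,
                  pre = (\<lambda>t. if t = Flat then ftop else sharp (pre U t)) \<rparr>"

end

theory Submission
  imports Defs
begin

text \<open>The translation prepends to the events of U a single fresh past state \<open>\<flat>\<close> that
  temporally precedes every event and sees only itself. So every history of \<open>U\<^sup>\<sharp>\<close> is
  \<open>[\<flat>]\<close> or \<open>[\<flat>, s]\<close>, which gives depth-definedness, and all remaining conditions on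
  \<open>U\<^sup>\<sharp>\<close> reduce to the facts that \<open>\<flat>\<close> is not an event of U and that U's epistemic
  relations stay inside its events. Preconditions are translated by the same recipe, so a
  structural induction shows that \<open>\<sharp>\<close> maps L_YDEL into L_RDETL.\<close>

lemma valid_ftop: "valid TY ftop"
  by (simp add: valid_def ftop_def fbot_def)

lemma valid_fimp_ftop: "valid TY (fimp f ftop)"
  by (simp add: valid_def ftop_def fbot_def fimp_def)

lemma in_rdetl_ftop: "in_rdetl TY ftop"
  by (simp add: ftop_def fbot_def)

lemma sharp_am_mk_am:
  "sharp_am (mk_am E R T P) =
     mk_am (insert Flat E) (\<lambda>a. R a \<union> {(Flat, Flat)}) ({Flat} \<times> E)
       (\<lambda>t. if t = Flat then ftop else sharp (P t))"
  unfolding sharp_am_def mk_am_def by (simp cong: if_cong)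

lemma wf_am_sharp_am: "wf_am U \<Longrightarrow> wf_am (sharp_am U)"
  by (auto simp: wf_am_def sharp_am_def)

lemma erel_sharp_am_from_Flat_iff:
  assumes "wf_am U" "Flat \<notin> evs U"
  shows "(Flat, t) \<in> erel (sharp_am U) a \<longleftrightarrow> t = Flat"
  using assms by (auto simp: sharp_am_def wf_am_def)

lemma history_sharp_am_iff:
  assumes "Flat \<notin> evs U"
  shows "history (sharp_am U) xs \<longleftrightarrow> xs = [Flat] \<or> (\<exists>s \<in> evs U. xs = [Flat, s])"
proof
  assume hist: "history (sharp_am U) xs"
  then have steps: "\<And>i. Suc i < length xs \<Longrightarrow> xs ! i = Flat \<and> xs ! Suc i \<in> evs U"
    by (auto simp: history_def progression_def sharp_am_def)
  have "length xs < 3"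
    using steps[of 0] steps[of 1] assms by (cases "length xs < 3") auto
  moreover have "hd xs = Flat"
    using hist by (cases xs) (auto simp: history_def progression_def sharp_am_def)
  moreover have "xs \<noteq> []"
    using hist by (simp add: history_def progression_def)
  ultimately show "xs = [Flat] \<or> (\<exists>s \<in> evs U. xs = [Flat, s])"
    using steps[of 0] by (cases xs rule: remdups_adj.cases) auto
qed (use assms in \<open>auto simp: history_def progression_def sharp_am_def less_Suc_eq\<close>)

lemma hist_lengths_sharp_am:
  assumes "Flat \<notin> evs U" "x \<in> evs (sharp_am U)"
  shows "hist_lengths (sharp_am U) x = {if x = Flat then 0 else 1}"
  using assms unfolding hist_lengths_def history_sharp_am_iff[OF assms(1)]
  by (cases "x = Flat") (auto simp: sharp_am_def intro: exI[of _ "[Flat]"] exI[of _ "[Flat, x]"])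

lemma depth_defined_sharp_am: "Flat \<notin> evs U \<Longrightarrow> depth_defined (sharp_am U)"
  by (simp add: depth_defined_def depth_def hist_lengths_sharp_am)

lemma knowledge_of_past_sharp_am:
  "wf_am U \<Longrightarrow> Flat \<notin> evs U \<Longrightarrow> knowledge_of_past (sharp_am U)"
  by (auto simp: knowledge_of_past_def sharp_am_def wf_am_def)

lemma knowledge_of_initial_time_sharp_am:
  "wf_am U \<Longrightarrow> knowledge_of_initial_time (sharp_am U)"
  by (auto simp: knowledge_of_initial_time_def sharp_am_def wf_am_def)

lemma uniqueness_of_past_sharp_am: "uniqueness_of_past (sharp_am U)"
  by (simp add: uniqueness_of_past_def sharp_am_def)

lemma perfect_recall_sharp_am:
  "wf_am U \<Longrightarrow> Flat \<notin> evs U \<Longrightarrow> perfect_recall (sharp_am U)"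
  by (auto simp: perfect_recall_def sharp_am_def wf_am_def)

lemma past_state_sharp_am_iff:
  "Flat \<notin> evs U \<Longrightarrow> past_state (sharp_am U) s \<longleftrightarrow> s = Flat"
  by (auto simp: past_state_def sharp_am_def)

lemma history_preservation_sharp_am:
  assumes "wf_am U" "Flat \<notin> evs U"
  shows "history_preservation TY (sharp_am U)"
proof -
  have "past_state (sharp_am U) Flat"
    by (simp add: past_state_sharp_am_iff[OF assms(2)])
  moreover have "valid TY (pre (sharp_am U) Flat)"
    by (simp add: sharp_am_def valid_ftop)
  ultimately have "epistemic_past_state TY (sharp_am U) Flat"
    by (simp add: epistemic_past_state_def erel_sharp_am_from_Flat_iff[OF assms])
  then show ?thesis
    using past_state_sharp_am_iff[OF assms(2)]
    by (auto simp: history_preservation_def sharp_am_def valid_fimp_ftop)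
qed

lemma rdetl_props_sharp_am:
  "wf_am U \<Longrightarrow> Flat \<notin> evs U \<Longrightarrow> rdetl_props TY (sharp_am U)"
  by (simp add: rdetl_props_def wf_am_sharp_am depth_defined_sharp_am
      knowledge_of_past_sharp_am history_preservation_sharp_am
      knowledge_of_initial_time_sharp_am uniqueness_of_past_sharp_am perfect_recall_sharp_am)

lemma in_rdetl_pre_sharp_am:
  "\<forall>t \<in> evs U. in_rdetl TY (sharp (pre U t)) \<Longrightarrow>
     \<forall>t \<in> evs (sharp_am U). in_rdetl TY (pre (sharp_am U) t)"
  by (auto simp: sharp_am_def in_rdetl_ftop)

lemma in_rdetl_sharp: "in_ydel f \<Longrightarrow> in_rdetl TY (sharp f)"
proof (induction f)
  case (Act E R T P s f)
  let ?U = "mk_am E R T P"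
  have "rdetl_props TY (sharp_am ?U)"
    using Act.prems by (intro rdetl_props_sharp_am) (auto simp: mk_am_def)
  moreover have "\<forall>t \<in> evs (sharp_am ?U). in_rdetl TY (pre (sharp_am ?U) t)"
    using Act by (intro in_rdetl_pre_sharp_am) (auto simp: mk_am_def)
  ultimately show ?case
    using Act by (simp add: sharp_am_mk_am) (simp add: mk_am_def)
qed auto

theorem lemma30:
  fixes U :: "('p, 'a :: finite) amodel"
  assumes "ydel_am U" and "atemporal U"
  shows "in_Act_rdetl TYPE('u) (sharp_am U)"
  using assms(1)
  by (simp add: in_Act_rdetl_def ydel_am_def rdetl_props_sharp_am in_rdetl_pre_sharp_am
      in_rdetl_sharp)

end
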